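(* Consider a connected open set $U\subset \mathrm{K}^{\circ}$. (i) For any $\omega\in \Sigma$, there is an $N\in \mathbb{N}_0$ such that $\mathcal{K}_{\omega}^N(U)$ is connected and $\mathcal{K}^N_{\omega}(U)\cap \mathbf{A}\neq \emptyset$. (ii) There are $\omega \in \Sigma, M\in \mathbb{N}_0$ such that $\mathcal{K}^M_\omega(U) \supseteq A_\alpha \cap A_\beta$ for some $\alpha, \beta \in \{1,2,3\}, \alpha\neq \beta$.
   Context: Fix a parameter $v\in(0,1/2)$. Let $\mathrm{K}^{\circ}$ denote the Kasner circle $\{(\Sigma_+,\Sigma_-)\,:\,\Sigma_+^2+\Sigma_-^2=1\}$, parametrized by the angle $\varphi$ via $(\Sigma_+,\Sigma_-)=(\cos\varphi,\sin\varphi)$. Let $A_1:=\{\Sigma_+\ge v\}\cap \mathrm{K}^{\circ}$, i.e. $\varphi\in[-\arccos v,\arccos v]$, and let $A_2,A_3$ be its images under rotation by $\pm 2\pi/3$ (namely $A_2=\{-(\Sigma_++\sqrt3\Sigma_-)/2\ge v\}$, $A_3=\{-(\Sigma_+-\sqrt3\Sigma_-)/2\ge v\}$). On $A_1$ define $\mathcal{K}_1(\varphi):=\pi-2\arctan\big(\tfrac{1+v}{1-v}\tan(\varphi/2)\big)$, and let $\mathcal{K}_2,\mathcal{K}_3$ on $A_2,A_3$ be the maps obtained from $\mathcal{K}_1$ by the same rotations. Set $\mathbf{A}:=(A_1\cap A_2)\cup(A_2\cap A_3)\cup(A_1\cap A_3)$. For $\mu\in\{1,2\},\nu\in\{2,3\},\zeta\in\{1,3\}$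 define $\mathcal{K}_{\mu\nu\zeta}:\mathrm{K}^{\circ}\to\mathrm{K}^{\circ}$ by $\mathcal{K}_{\mu\nu\zeta}(p)=\mathcal{K}_\alpha(p)$ if $p\in A_\alpha\setminus\mathbf{A}$, $=\mathcal{K}_\mu(p)$ if $p\in A_1\cap A_2$, $=\mathcal{K}_\nu(p)$ if $p\in A_2\cap A_3$, $=\mathcal{K}_\zeta(p)$ if $p\in A_1\cap A_3$. Let $\Sigma$ be the space of sequences $\omega=(\mu_n,\nu_n,\zeta_n)_{n\ge1}$ with $\mu_n\in\{1,2\},\nu_n\in\{2,3\},\zeta_n\in\{1,3\}$, and for $\omega=(\omega_n)$ set $\mathcal{K}^n_\omega:=\mathcal{K}_{\omega_n}\circ\cdots\circ\mathcal{K}_{\omega_1}$, $\mathcal{K}^0_\omega=\mathrm{Id}$. *)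

theory Defs
  imports "HOL-Analysis.Analysis"
begin

text \<open>The Kasner circle, as the unit circle in the complex plane:
  a point p corresponds to (Sigma_+, Sigma_-) = (Re p, Im p) = (cos phi, sin phi).\<close>
definition KC :: "complex set" where
  "KC = sphere 0 1"

definition Aarc :: "real \<Rightarrow> nat \<Rightarrow> complex set" where
  "Aarc v a =
     (if a = 1 then {p \<in> KC. Re p \<ge> v}
      else if a = 2 then {p \<in> KC. - (Re p + sqrt 3 * Im p) / 2 \<ge> v}
      else {p \<in> KC. - (Re p - sqrt 3 * Im p) / 2 \<ge> v})"

definition bfA :: "real \<Rightarrow> complex set" where
  "bfA v = (Aarc v 1 \<inter> Aarc v 2) \<union> (Aarc v 2 \<inter> Aarc v 3) \<union> (Aarc v 1 \<inter> Aarc v 3)"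

definition K1 :: "real \<Rightarrow> complex \<Rightarrow> complex" where
  "K1 v p = cis (pi - 2 * arctan ((1 + v) / (1 - v) * tan (Arg p / 2)))"

text \<open>K_2, K_3 obtained from K_1 by the rotations carrying A_1 onto A_2, A_3.
  A_2 is the rotation of A_1 by -2pi/3, A_3 the rotation by +2pi/3.\<close>
definition Kmap :: "real \<Rightarrow> nat \<Rightarrow> complex \<Rightarrow> complex" where
  "Kmap v a p =
     (if a = 1 then K1 v p
      else if a = 2 then cis (- 2 * pi / 3) * K1 v (cis (2 * pi / 3) * p)
      else cis (2 * pi / 3) * K1 v (cis (- 2 * pi / 3) * p))"

definition Kchoice :: "real \<Rightarrow> nat \<times> nat \<times> nat \<Rightarrow> complex \<Rightarrow> complex" where
  "Kchoice v w p =
     (case w of (mu, nu, zeta) \<Rightarrow>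
       (if p \<in> Aarc v 1 \<inter> Aarc v 2 then Kmap v mu p
        else if p \<in> Aarc v 2 \<inter> Aarc v 3 then Kmap v nu p
        else if p \<in> Aarc v 1 \<inter> Aarc v 3 then Kmap v zeta p
        else if p \<in> Aarc v 1 then Kmap v 1 p
        else if p \<in> Aarc v 2 then Kmap v 2 p
        else Kmap v 3 p))"

text \<open>The sequence space Sigma. Sequences are indexed from 0: omega n here is the
  paper's omega_{n+1}.\<close>
definition SigmaSp :: "(nat \<Rightarrow> nat \<times> nat \<times> nat) set" where
  "SigmaSp = {\<omega>. \<forall>n. \<omega> n \<in> {1,2} \<times> {2,3} \<times> {1,3}}"

fun Kiter :: "real \<Rightarrow> (nat \<Rightarrow> nat \<times> nat \<times> nat) \<Rightarrow> nat \<Rightarrow> complex \<Rightarrow> complex" where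
  "Kiter v \<omega> 0 = id"
| "Kiter v \<omega> (Suc n) = Kchoice v (\<omega> n) \<circ> Kiter v \<omega> n"

end

(*
  In the angle coordinate phi of the Kasner circle, A_(arc_index i) is the arc of radius
  arccos v = pi/3 + e (e = overlap_radius v) around arc_centre i = 2 pi i/3; consecutive
  arcs overlap in arcs of radius e around the odd multiples of pi/3, and the rest of A_i, its gap
  |phi - arc_centre i| < pi/3 - e, meets no other arc.  On A_i the map K_i reads
  phi |-> arc_centre i + psi (phi - arc_centre i) with psi t = pi - 2 arctan (c tan (t/2)),
  c = (1+v)/(1-v): psi is decreasing, |psi'| >= 1 on the whole arc and |psi'| >= lambda > 1
  for |t| <= pi/3.

  (i) As long as the images of U avoid bold A, each of them lies in a single arc, on which K
  is continuous, so they stay connected; and an interval of angles they contain lies in a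
  gap, where K stretches it by the factor lambda.  This cannot go on forever.

  (ii) Choosing at the overlaps the branch that keeps the current interval inside one arc,
  its length grows by a fixed amount at every step until it contains a window
  [k pi/3 - e, k pi/3 + e].  For odd k this window is an overlap; for even k its image is
  one, since psi 0 = pi and |psi'| >= 1.
*)

theory Submission
  imports Defs
begin

lemma has_real_derivative_arctan_tan_half:
  assumes "cos (t/2) \<noteq> 0"
  shows "((\<lambda>t. 2 * arctan (c * tan (t/2)) - lam * t) has_real_derivative
           c * (1 + (tan (t/2))\<^sup>2) / (1 + c\<^sup>2 * (tan (t/2))\<^sup>2) - lam) (at t)"
proof (rule DERIV_cong)
  show "((\<lambda>t. 2 * arctan (c * tan (t/2)) - lam * t) has_real_derivative
      2 * (inverse (1 + (c * tan (t/2))\<^sup>2) * (c * (inverse ((cos (t/2))\<^sup>2) * (1/2)))) - lam * 1) (at t)"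
    by (rule derivative_eq_intros DERIV_arctan DERIV_tan assms refl | simp)+
  have "inverse ((cos (t/2))\<^sup>2) = 1 + (tan (t/2))\<^sup>2"
    using tan_sec[OF assms] by (simp add: power_inverse)
  then show "2 * (inverse (1 + (c * tan (t/2))\<^sup>2) * (c * (inverse ((cos (t/2))\<^sup>2) * (1/2)))) - lam * 1
      = c * (1 + (tan (t/2))\<^sup>2) / (1 + c\<^sup>2 * (tan (t/2))\<^sup>2) - lam"
    by (simp only: power_mult_distrib divide_inverse) simp
qed

lemma arctan_tan_half_minus_linear_mono:
  assumes "-pi < p" "p \<le> q" "q < pi"
    and slope: "\<And>t. p \<le> t \<Longrightarrow> t \<le> q \<Longrightarrow> lam * (1 + c\<^sup>2 * (tan (t/2))\<^sup>2) \<le> c * (1 + (tan (t/2))\<^sup>2)"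
  shows "2 * arctan (c * tan (p/2)) - lam * p \<le> 2 * arctan (c * tan (q/2)) - lam * q"
proof (rule DERIV_nonneg_imp_nondecreasing[OF \<open>p \<le> q\<close>])
  fix x assume x: "p \<le> x" "x \<le> q"
  have "cos (x/2) > 0" using x assms by (intro cos_gt_zero_pi) auto
  moreover have "0 < 1 + c\<^sup>2 * (tan (x/2))\<^sup>2" by (simp add: add_pos_nonneg)
  then have "0 \<le> c * (1 + (tan (x/2))\<^sup>2) / (1 + c\<^sup>2 * (tan (x/2))\<^sup>2) - lam"
    using slope[OF x] by (simp add: field_simps)
  ultimately show "\<exists>y. ((\<lambda>t. 2 * arctan (c * tan (t/2)) - lam * t) has_real_derivative y) (at x) \<and> 0 \<le> y"
    using has_real_derivative_arctan_tan_half[of x c lam] by force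
qed

lemma tan_half_sq_mono:
  assumes "\<bar>t\<bar> \<le> y" "y < pi"
  shows "(tan (t/2))\<^sup>2 \<le> (tan (y/2))\<^sup>2"
proof -
  have "0 \<le> tan (\<bar>t\<bar>/2)"
  proof (cases "t = 0")
    case False
    then show ?thesis using assms by (intro less_imp_le[OF tan_gt_zero]) auto
  qed simp
  moreover have "tan (\<bar>t\<bar>/2) \<le> tan (y/2)" using assms by (intro tan_mono_le) auto
  moreover have "(tan (\<bar>t\<bar>/2))\<^sup>2 = (tan (t/2))\<^sup>2" by (cases "t \<ge> 0") auto
  ultimately show ?thesis by (metis power_mono)
qed

lemma tan_half_arccos_sq:
  assumes "-1 < v" "v \<le> 1"
  shows "(tan (arccos v / 2))\<^sup>2 = (1 - v) / (1 + v)"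
proof -
  have "cos (arccos v) = v" using assms by simp
  then have cos_sq: "(cos (arccos v / 2))\<^sup>2 = (1 + v) / 2"
    using cos_double_cos[of "arccos v / 2"] by simp
  then have sin_sq: "(sin (arccos v / 2))\<^sup>2 = (1 - v) / 2"
    unfolding sin_squared_eq by (simp add: field_simps)
  show ?thesis
    unfolding tan_def power_divide sin_sq cos_sq using assms by (simp add: field_simps)
qed

lemma cos_le_cos_iff_near_2pi_multiple:
  assumes "0 \<le> a" "a \<le> pi"
  shows "cos a \<le> cos y \<longleftrightarrow> (\<exists>m::int. \<bar>y - 2 * pi * of_int m\<bar> \<le> a)"
proof -
  have cos_shift: "cos \<bar>y - 2 * pi * of_int m\<bar> = cos y" for m :: int
    by (simp add: cos_diff abs_if)
  have near: "cos a \<le> cos y \<longleftrightarrow> \<bar>y - 2 * pi * of_int m\<bar> \<le> a"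
    if "\<bar>y - 2 * pi * of_int m\<bar> \<le> pi" for m :: int
    using cos_mono_le_eq[of a "\<bar>y - 2 * pi * of_int m\<bar>"] assms that cos_shift[of m] by simp
  show ?thesis
  proof
    assume le: "cos a \<le> cos y"
    define m where "m = \<lfloor>y / (2*pi) + 1/2\<rfloor>"
    have "\<bar>y / (2*pi) - of_int m\<bar> \<le> 1/2" unfolding m_def by linarith
    then have "\<bar>(y - 2 * pi * of_int m) / (2*pi)\<bar> \<le> 1/2" by (simp add: field_simps)
    then have "\<bar>y - 2 * pi * of_int m\<bar> \<le> pi" by (simp add: abs_divide field_simps)
    with le near show "\<exists>m::int. \<bar>y - 2 * pi * of_int m\<bar> \<le> a" by blast
  next
    assume "\<exists>m::int. \<bar>y - 2 * pi * of_int m\<bar> \<le> a"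
    with near assms show "cos a \<le> cos y" by force
  qed
qed

lemma cis_add_2pi_multiple: "cis (x + 2 * pi * of_int m) = cis x"
  by (simp flip: cis_mult)

lemma connected_subset_of_closed_cover:
  assumes "connected S" "finite K" "K \<noteq> {}"
    and closed: "\<And>k. k \<in> K \<Longrightarrow> closed (C k)" and cover: "S \<subseteq> (\<Union>k\<in>K. C k)"
    and disjoint: "\<And>j k. j \<in> K \<Longrightarrow> k \<in> K \<Longrightarrow> j \<noteq> k \<Longrightarrow> S \<inter> C j \<inter> C k = {}"
  shows "\<exists>k\<in>K. S \<subseteq> C k"
proof (cases "S = {}")
  case True
  with \<open>K \<noteq> {}\<close> show ?thesis by blast
next
  case False
  then obtain k where k: "k \<in> K" "S \<inter> C k \<noteq> {}" using cover by blast
  have "closedin (top_of_set S) (S \<inter> C k)" "closedin (top_of_set S) (S \<inter> (\<Union>j\<in>K - {k}. C j))"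
    using assms(2) closed k(1) by (auto intro!: closedin_closed_Int closed_UN)
  moreover have "S \<subseteq> (S \<inter> C k) \<union> (S \<inter> (\<Union>j\<in>K - {k}. C j))"
    "(S \<inter> C k) \<inter> (S \<inter> (\<Union>j\<in>K - {k}. C j)) = {}"
    using cover disjoint k(1) by blast+
  ultimately have "S \<inter> (\<Union>j\<in>K - {k}. C j) = {}"
    using \<open>connected S\<close> k(2) unfolding connected_closedin by blast
  then show ?thesis using cover k(1) by blast
qed

lemma Aarc_triple_Int_empty: "0 < v \<Longrightarrow> Aarc v 1 \<inter> Aarc v 2 \<inter> Aarc v 3 = {}"
  by (auto simp: Aarc_def)

lemma Kchoice_outside_bfA:
  assumes "k \<in> {1,2,3}" "p \<in> Aarc v k" "p \<notin> bfA v"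
  shows "Kchoice v w p = Kmap v k p"
  using assms by (cases w) (auto simp: Kchoice_def bfA_def)

definition arc_centre :: "int \<Rightarrow> real" where
  "arc_centre i = 2 * pi * of_int i / 3"

definition arc_index :: "int \<Rightarrow> nat" where
  "arc_index i = (if i mod 3 = 0 then 1 else if i mod 3 = 1 then 3 else 2)"

lemma arc_index_range: "arc_index i \<in> {1,2,3}"
  by (simp add: arc_index_def)

lemma arc_index_eq_iff: "arc_index i = arc_index j \<longleftrightarrow> i mod 3 = j mod 3"
proof -
  have "i mod 3 \<in> {0,1,2}" "j mod 3 \<in> {0,1,2}" by auto
  then show ?thesis by (auto simp: arc_index_def)
qed

lemma arc_index_succ_neq: "arc_index (i + 1) \<noteq> arc_index i"
  unfolding arc_index_eq_iff by presburger

lemma arc_index_surj: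
  assumes "k \<in> {1,2,3}"
  shows "\<exists>i. arc_index i = k"
proof -
  have "arc_index 0 = 1" "arc_index 2 = 2" "arc_index 1 = 3" by (simp_all add: arc_index_def)
  with assms show ?thesis by blast
qed

lemma Kchoice_overlap:
  assumes "0 < v" "p \<in> Aarc v (arc_index i)" "p \<in> Aarc v (arc_index (i + 1))"
  shows "Kchoice v (2,3,1) p = Kmap v (arc_index i) p"
    and "Kchoice v (1,2,3) p = Kmap v (arc_index (i + 1)) p"
proof -
  have "i mod 3 = 0 \<and> (i + 1) mod 3 = 1 \<or> i mod 3 = 1 \<and> (i + 1) mod 3 = 2 \<or> i mod 3 = 2 \<and> (i + 1) mod 3 = 0"
    by presburger
  then show "Kchoice v (2,3,1) p = Kmap v (arc_index i) p"
    and "Kchoice v (1,2,3) p = Kmap v (arc_index (i + 1)) p"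
    using assms Aarc_triple_Int_empty[OF assms(1)] by (auto simp: arc_index_def Kchoice_def)
qed

lemma arc_centre_cases:
  obtains "arc_index i = 1" "cis (arc_centre i) = 1"
  | "arc_index i = 3" "cis (arc_centre i) = cis (2*pi/3)"
  | "arc_index i = 2" "cis (arc_centre i) = cis (- (2*pi/3))"
proof -
  have "real_of_int i = of_int (i mod 3) + 3 * of_int (i div 3)"
    by (metis mod_mult_div_eq of_int_add of_int_mult of_int_numeral)
  then have "arc_centre i = arc_centre (i mod 3) + 2 * pi * of_int (i div 3)"
    by (simp add: arc_centre_def field_simps)
  then have mod3: "cis (arc_centre i) = cis (arc_centre (i mod 3))"
    by (simp only: cis_add_2pi_multiple)
  have "cis (arc_centre 2) = cis (- (2*pi/3) + 2 * pi * of_int 1)"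
    by (simp add: arc_centre_def)
  then have centre2: "cis (arc_centre 2) = cis (- (2*pi/3))"
    by (simp only: cis_add_2pi_multiple)
  have "i mod 3 = 0 \<or> i mod 3 = 1 \<or> i mod 3 = 2" by auto
  then show ?thesis
    using that mod3 centre2 by (auto simp: arc_index_def arc_centre_def)
qed

lemma Aarc_arc_index: "Aarc v (arc_index i) = {p \<in> KC. v \<le> Re (cis (- arc_centre i) * p)}"
proof -
  have cis_minus: "cis (- arc_centre i) = cnj (cis (arc_centre i))" by (simp add: cis_cnj)
  show ?thesis
    by (cases i rule: arc_centre_cases)
      (auto simp: Aarc_def cis_minus cos_120 sin_120 cos_120' sin_120' field_simps)
qed

lemma Kmap_arc_index: "Kmap v (arc_index i) p = cis (arc_centre i) * K1 v (cis (- arc_centre i) * p)"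
proof -
  have cis_minus: "cis (- arc_centre i) = cnj (cis (arc_centre i))" by (simp add: cis_cnj)
  show ?thesis
    by (cases i rule: arc_centre_cases) (auto simp: Kmap_def cis_minus cis_cnj)
qed

lemma closed_Aarc: "closed (Aarc v k)"
  by (auto simp: Aarc_def KC_def Collect_conj_eq intro!: closed_Int closed_Collect_le closed_Collect_eq continuous_intros)

lemma isCont_K1:
  assumes "0 < Re p"
  shows "isCont (K1 v) p"
proof -
  have "p \<notin> \<real>\<^sub>\<le>\<^sub>0" using assms by (auto simp: complex_nonpos_Reals_iff)
  then have "isCont Arg p" by (rule continuous_at_Arg)
  have "p \<noteq> 0" using assms by auto
  then have "cos (Arg p) = Re p / cmod p"
    by (metis Re_sgn cis.sel(1) cis_Arg)
  then have "cos (Arg p) > 0" using assms \<open>p \<noteq> 0\<close> by simp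
  then have "Arg p \<noteq> pi" by auto
  then have "cos (Arg p / 2) > 0" using Arg_bounded[of p] by (intro cos_gt_zero_pi) auto
  then have "isCont (\<lambda>p. tan (Arg p / 2)) p"
    using \<open>isCont Arg p\<close> by (intro isCont_o2[OF _ isCont_tan] continuous_intros) auto
  then have "isCont (\<lambda>p. pi - 2 * arctan ((1 + v) / (1 - v) * tan (Arg p / 2))) p"
    by (intro continuous_intros)
  then show ?thesis
    unfolding K1_def[abs_def] isCont_def by (rule tendsto_cis)
qed

lemma continuous_on_Kmap:
  assumes "0 < v" "k \<in> {1,2,3}"
  shows "continuous_on (Aarc v k) (Kmap v k)"
proof -
  obtain i where k: "k = arc_index i" using arc_index_surj[OF assms(2)] by metis
  have "isCont (\<lambda>p. cis (arc_centre i) * K1 v (cis (- arc_centre i) * p)) p" if "p \<in> Aarc v k" for p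
  proof -
    have "0 < Re (cis (- arc_centre i) * p)" using that assms(1) unfolding k Aarc_arc_index by auto
    then have "isCont (K1 v) (cis (- arc_centre i) * p)" by (rule isCont_K1)
    with continuous_mult_left[OF continuous_ident]
    have "isCont (\<lambda>p. K1 v (cis (- arc_centre i) * p)) p" by (rule isCont_o2)
    then show ?thesis by (intro continuous_intros)
  qed
  then show ?thesis
    unfolding k Kmap_arc_index[abs_def] by (intro continuous_at_imp_continuous_on) blast
qed

lemma KC_cis_Arg:
  assumes "p \<in> KC"
  shows "cis (Arg p) = p"
proof -
  have "norm p = 1" using assms by (simp add: KC_def)
  moreover from this have "p \<noteq> 0" by auto
  ultimately show ?thesis using cis_Arg[of p] by (simp add: sgn_div_norm)
qed

lemma Kchoice_in_KC: "Kchoice v w p \<in> KC"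
  by (cases w) (simp add: Kchoice_def Kmap_def K1_def KC_def norm_mult)

lemma Kiter_Suc_image: "Kiter v \<omega> (Suc n) ` U = Kchoice v (\<omega> n) ` Kiter v \<omega> n ` U"
  by (simp add: image_comp)

lemma Kiter_image_subset_KC: "U \<subseteq> KC \<Longrightarrow> Kiter v \<omega> n ` U \<subseteq> KC"
  by (cases n) (auto simp: Kchoice_in_KC)

definition kasner_ratio :: "real \<Rightarrow> real" where
  "kasner_ratio v = (1 + v) / (1 - v)"

definition K1_angle :: "real \<Rightarrow> real \<Rightarrow> real" where
  "K1_angle v t = pi - 2 * arctan (kasner_ratio v * tan (t/2))"

definition K_angle :: "real \<Rightarrow> int \<Rightarrow> real \<Rightarrow> real" where
  "K_angle v i x = arc_centre i + K1_angle v (x - arc_centre i)"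

definition overlap_radius :: "real \<Rightarrow> real" where
  "overlap_radius v = arccos v - pi/3"

definition expansion_rate :: "real \<Rightarrow> real" where
  "expansion_rate v = 4 * kasner_ratio v / (3 + (kasner_ratio v)\<^sup>2)"

lemma K1_cis: "t \<in> {-pi<..pi} \<Longrightarrow> K1 v (cis t) = cis (K1_angle v t)"
  by (simp add: K1_def K1_angle_def kasner_ratio_def Arg_cis)

locale kasner_parameter =
  fixes v :: real
  assumes v_pos: "0 < v" and v_less_half: "v < 1/2"
begin

lemma arccos_bounds: "pi/3 < arccos v" "arccos v < pi/2"
proof -
  have "arccos (1/2) < arccos v" using v_pos v_less_half by (intro arccos_less_arccos) auto
  moreover have "arccos (1/2) = pi/3" using arccos_cos[of "pi/3"] cos_60 by simp
  ultimately show "pi/3 < arccos v" by simp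
  have "arccos v < arccos 0" using v_pos v_less_half by (intro arccos_less_arccos) auto
  then show "arccos v < pi/2" by simp
qed

lemma overlap_radius_bounds: "0 < overlap_radius v" "overlap_radius v < pi/6"
  using arccos_bounds by (auto simp: overlap_radius_def)

lemma kasner_ratio_bounds: "1 < kasner_ratio v" "kasner_ratio v < 3"
  using v_pos v_less_half by (auto simp: kasner_ratio_def field_simps)

lemma expansion_rate_gt_1: "1 < expansion_rate v"
proof -
  have "(kasner_ratio v - 1) * (3 - kasner_ratio v) > 0" using kasner_ratio_bounds by simp
  then have "3 + (kasner_ratio v)\<^sup>2 < 4 * kasner_ratio v" by (simp add: algebra_simps power2_eq_square)
  then show ?thesis by (simp add: expansion_rate_def field_simps add_pos_nonneg)
qed

text \<open>The slope of \<^term>\<open>K1_angle v\<close> at \<open>t\<close> is \<open>-c (1 + T\<^sup>2) / (1 + c\<^sup>2 T\<^sup>2)\<close> with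
  \<open>c = kasner_ratio v > 1\<close> and \<open>T = tan (t/2)\<close>; its modulus decreases in \<open>T\<^sup>2\<close>, equals 1 at the
  ends of the arc (\<open>T\<^sup>2 = 1/c\<close>) and \<^term>\<open>expansion_rate v\<close> at \<open>\<bar>t\<bar> = pi/3\<close> (\<open>T\<^sup>2 = 1/3\<close>).\<close>

lemma K1_angle_slope_ge_1:
  assumes "\<bar>t\<bar> \<le> arccos v"
  shows "1 + (kasner_ratio v)\<^sup>2 * (tan (t/2))\<^sup>2 \<le> kasner_ratio v * (1 + (tan (t/2))\<^sup>2)"
proof -
  have "(tan (t/2))\<^sup>2 \<le> (1 - v) / (1 + v)"
    using tan_half_sq_mono[OF assms] arccos_bounds tan_half_arccos_sq v_pos v_less_half by simp
  then have "kasner_ratio v * (tan (t/2))\<^sup>2 \<le> kasner_ratio v * ((1 - v) / (1 + v))"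
    using kasner_ratio_bounds by (intro mult_left_mono) auto
  also have "\<dots> = 1" using v_pos v_less_half by (simp add: kasner_ratio_def)
  finally have "0 \<le> (kasner_ratio v - 1) * (1 - kasner_ratio v * (tan (t/2))\<^sup>2)"
    using kasner_ratio_bounds by simp
  then show ?thesis by (simp add: algebra_simps power2_eq_square)
qed

lemma K1_angle_slope_ge_expansion_rate:
  assumes "\<bar>t\<bar> \<le> pi/3"
  shows "expansion_rate v * (1 + (kasner_ratio v)\<^sup>2 * (tan (t/2))\<^sup>2)
    \<le> kasner_ratio v * (1 + (tan (t/2))\<^sup>2)"
proof -
  define c where "c = kasner_ratio v"
  define u where "u = (tan (t/2))\<^sup>2"
  have "u \<le> (tan (pi/6))\<^sup>2" using tan_half_sq_mono[OF assms] by (simp add: u_def)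
  then have "u \<le> 1/3" by (simp add: tan_30 power_divide)
  then have "0 \<le> c * (c\<^sup>2 - 1) * (1 - 3 * u)"
    using kasner_ratio_bounds one_less_power[of c 2] unfolding c_def by (intro mult_nonneg_nonneg) auto
  then have "4 * c * (1 + c\<^sup>2 * u) \<le> c * (1 + u) * (3 + c\<^sup>2)"
    by (simp add: algebra_simps power2_eq_square)
  moreover have "3 + c\<^sup>2 > 0" by (simp add: add_pos_nonneg)
  ultimately show ?thesis
    unfolding expansion_rate_def c_def[symmetric] u_def[symmetric] by (simp add: field_simps)
qed

lemma K1_angle_expanding:
  assumes "- arccos v \<le> s" "s \<le> p" "p \<le> q" "q \<le> t" "t \<le> arccos v" "- (pi/3) \<le> p" "q \<le> pi/3"
  shows "(t - s) + (expansion_rate v - 1) * (q - p) \<le> K1_angle v s - K1_angle v t"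
proof -
  let ?g = "\<lambda>lam x. 2 * arctan (kasner_ratio v * tan (x/2)) - lam * x"
  have slope_1: "?g 1 x \<le> ?g 1 y" if "- arccos v \<le> x" "x \<le> y" "y \<le> arccos v" for x y
    by (rule arctan_tan_half_minus_linear_mono) (use that arccos_bounds K1_angle_slope_ge_1 in auto)
  have "?g (expansion_rate v) p \<le> ?g (expansion_rate v) q"
    by (rule arctan_tan_half_minus_linear_mono)
      (use assms arccos_bounds K1_angle_slope_ge_expansion_rate in auto)
  with slope_1[of s p] slope_1[of q t] assms show ?thesis
    unfolding K1_angle_def by (simp add: algebra_simps)
qed

lemma continuous_on_K1_angle: "continuous_on {- arccos v .. arccos v} (K1_angle v)"
proof -
  have "cos (x/2) \<noteq> 0" if "x \<in> {- arccos v .. arccos v}" for x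
    using that arccos_bounds cos_gt_zero_pi[of "x/2"] by auto
  then show ?thesis unfolding K1_angle_def by (intro continuous_intros) auto
qed

end

lemma arc_centre_add: "arc_centre (i + n) = arc_centre i + 2*pi/3 * of_int n"
  by (simp add: arc_centre_def field_simps)

lemma arc_centre_less_iff: "arc_centre i < arc_centre j \<longleftrightarrow> i < j"
  by (simp add: arc_centre_def divide_strict_right_mono)

context kasner_parameter
begin

lemma cis_mem_Aarc_arc_index:
  "cis x \<in> Aarc v (arc_index i) \<longleftrightarrow> (\<exists>m. \<bar>x - arc_centre (i + 3 * m)\<bar> \<le> arccos v)"
proof -
  have "Re (cis (- arc_centre i) * cis x) = cos (x - arc_centre i)"
    by (simp add: cis_mult)
  moreover have "cos (arccos v) = v" using v_pos v_less_half by simp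
  moreover have "arc_centre (i + 3 * m) = arc_centre i + 2 * pi * of_int m" for m
    by (simp add: arc_centre_def field_simps)
  ultimately show ?thesis
    using cos_le_cos_iff_near_2pi_multiple[of "arccos v" "x - arc_centre i"] arccos_bounds
    by (simp add: Aarc_arc_index KC_def algebra_simps)
qed

lemma cis_mem_Aarc_iff:
  assumes "k \<in> {1,2,3}"
  shows "cis x \<in> Aarc v k \<longleftrightarrow> (\<exists>i. arc_index i = k \<and> \<bar>x - arc_centre i\<bar> \<le> arccos v)"
proof -
  obtain i where i: "arc_index i = k" using arc_index_surj[OF assms] ..
  have "arc_index j = arc_index i \<longleftrightarrow> (\<exists>m. j = i + 3 * m)" for j
    unfolding arc_index_eq_iff by presburger
  then show ?thesis
    unfolding i[symmetric] cis_mem_Aarc_arc_index by auto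
qed

lemma arccos_eq: "arccos v = pi/3 + overlap_radius v"
  by (simp add: overlap_radius_def)

lemma cis_mem_Aarc_gap:
  assumes "\<bar>x - arc_centre i\<bar> < pi/3 - overlap_radius v" "k \<in> {1,2,3}"
  shows "cis x \<in> Aarc v k \<longleftrightarrow> k = arc_index i"
proof -
  have "j = i" if "\<bar>x - arc_centre j\<bar> \<le> arccos v" for j
  proof -
    have "arc_centre (i - 1) < arc_centre j" "arc_centre j < arc_centre (i + 1)"
      using assms(1) that arc_centre_add[of i 1] arc_centre_add[of i "-1"] unfolding arccos_eq
      by (auto simp: abs_le_iff abs_less_iff)
    then show "j = i" unfolding arc_centre_less_iff by linarith
  qed
  moreover have "\<bar>x - arc_centre i\<bar> \<le> arccos v"
    using assms(1) overlap_radius_bounds arccos_eq by linarith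
  ultimately show ?thesis using cis_mem_Aarc_iff[OF assms(2)] by blast
qed

lemma cis_mem_Aarc_overlap:
  assumes "\<bar>x - arc_centre i - pi/3\<bar> \<le> overlap_radius v" "k \<in> {1,2,3}"
  shows "cis x \<in> Aarc v k \<longleftrightarrow> k = arc_index i \<or> k = arc_index (i + 1)"
proof -
  have "j = i \<or> j = i + 1" if "\<bar>x - arc_centre j\<bar> \<le> arccos v" for j
  proof -
    have "arc_centre (i - 1) < arc_centre j" "arc_centre j < arc_centre (i + 2)"
      using assms(1) that overlap_radius_bounds arc_centre_add[of i 2] arc_centre_add[of i "-1"]
      unfolding arccos_eq by (auto simp: abs_le_iff)
    then show ?thesis unfolding arc_centre_less_iff by linarith
  qed
  moreover have "\<bar>x - arc_centre i\<bar> \<le> arccos v" "\<bar>x - arc_centre (i + 1)\<bar> \<le> arccos v"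
    using assms(1) overlap_radius_bounds arc_centre_add[of i 1] unfolding arccos_eq
    by (auto simp: abs_le_iff)
  ultimately show ?thesis using cis_mem_Aarc_iff[OF assms(2)] by blast
qed

lemma gap_not_in_bfA:
  assumes "\<bar>x - arc_centre i\<bar> < pi/3 - overlap_radius v"
  shows "cis x \<notin> bfA v"
  using cis_mem_Aarc_gap[OF assms] unfolding bfA_def by auto

lemma overlap_in_Aarc:
  assumes "\<bar>x - arc_centre i - pi/3\<bar> \<le> overlap_radius v"
  shows "cis x \<in> Aarc v (arc_index i)" "cis x \<in> Aarc v (arc_index (i + 1))"
  using cis_mem_Aarc_overlap[OF assms] arc_index_range by auto

lemma overlap_in_bfA:
  assumes "\<bar>x - arc_centre i - pi/3\<bar> \<le> overlap_radius v"
  shows "cis x \<in> bfA v"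
proof -
  have "arc_index i \<in> {1,2,3}" "arc_index (i + 1) \<in> {1,2,3}" "arc_index (i + 1) \<noteq> arc_index i"
    using arc_index_range arc_index_succ_neq by auto
  with overlap_in_Aarc[OF assms] show ?thesis unfolding bfA_def by auto
qed

lemma angle_in_gap_or_overlap:
  obtains i where "\<bar>x - arc_centre i\<bar> < pi/3 - overlap_radius v"
  | i where "\<bar>x - arc_centre i - pi/3\<bar> \<le> overlap_radius v"
proof -
  define i where "i = \<lfloor>(x + pi/3 - overlap_radius v) / (2*pi/3)\<rfloor>"
  have "of_int i \<le> (x + pi/3 - overlap_radius v) / (2*pi/3)"
    "(x + pi/3 - overlap_radius v) / (2*pi/3) < of_int i + 1"
    unfolding i_def by linarith+
  then have "arc_centre i \<le> x + pi/3 - overlap_radius v" "x + pi/3 - overlap_radius v < arc_centre i + 2*pi/3"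
    by (simp_all add: arc_centre_def field_simps)
  then have lo: "- (pi/3 - overlap_radius v) \<le> x - arc_centre i"
    and hi: "x - arc_centre i < pi/3 + overlap_radius v"
    by linarith+
  show ?thesis
  proof (cases "x - arc_centre i = - (pi/3 - overlap_radius v)")
    case True
    then have "x - arc_centre (i - 1) - pi/3 = overlap_radius v"
      using arc_centre_add[of i "-1"] by simp
    then have "\<bar>x - arc_centre (i - 1) - pi/3\<bar> \<le> overlap_radius v"
      using overlap_radius_bounds by simp
    then show ?thesis by (rule that(2))
  next
    case False
    show ?thesis
    proof (cases "x - arc_centre i < pi/3 - overlap_radius v")
      case True
      with lo False have "\<bar>x - arc_centre i\<bar> < pi/3 - overlap_radius v" by linarith
      then show ?thesis by (rule that(1))
    next
      case False
      with hi have "\<bar>x - arc_centre i - pi/3\<bar> \<le> overlap_radius v" by linarith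
      then show ?thesis by (rule that(2))
    qed
  qed
qed

lemma cis_in_Aarc:
  assumes "\<bar>x - arc_centre i\<bar> \<le> arccos v"
  shows "cis x \<in> Aarc v (arc_index i)"
  using assms unfolding cis_mem_Aarc_arc_index by (intro exI[of _ 0]) simp

lemma Kmap_cis:
  assumes "\<bar>x - arc_centre i\<bar> \<le> arccos v"
  shows "Kmap v (arc_index i) (cis x) = cis (K_angle v i x)"
proof -
  have "x - arc_centre i \<in> {-pi<..pi}" using assms arccos_bounds by (auto simp: abs_le_iff)
  moreover have "cis (- arc_centre i) * cis x = cis (x - arc_centre i)" by (simp add: cis_mult)
  ultimately show ?thesis
    by (simp add: Kmap_arc_index K1_cis K_angle_def cis_mult)
qed

lemma Kchoice_gap:
  assumes "\<bar>x - arc_centre i\<bar> < pi/3 - overlap_radius v"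
  shows "Kchoice v w (cis x) = cis (K_angle v i x)"
proof -
  have "cis x \<in> Aarc v (arc_index i)" using cis_mem_Aarc_gap[OF assms] arc_index_range by blast
  then have "Kchoice v w (cis x) = Kmap v (arc_index i) (cis x)"
    using Kchoice_outside_bfA gap_not_in_bfA[OF assms] arc_index_range by blast
  also have "\<dots> = cis (K_angle v i x)"
    using assms overlap_radius_bounds arccos_eq by (intro Kmap_cis) linarith
  finally show ?thesis .
qed

text \<open>On an overlap, the choice \<open>(2,3,1)\<close> applies the map of the arc with the smaller centre,
  \<open>(1,2,3)\<close> that of the arc with the larger one.\<close>

lemma Kchoice_231_cis:
  assumes "arc_centre i - (pi/3 - overlap_radius v) < x" "x \<le> arc_centre i + arccos v"
  shows "Kchoice v (2,3,1) (cis x) = cis (K_angle v i x)"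
proof (cases "x < arc_centre i + (pi/3 - overlap_radius v)")
  case True
  with assms show ?thesis by (intro Kchoice_gap) linarith
next
  case False
  then have overlap: "\<bar>x - arc_centre i - pi/3\<bar> \<le> overlap_radius v"
    using assms(2) arccos_eq by (auto simp: abs_le_iff)
  then have "Kchoice v (2,3,1) (cis x) = Kmap v (arc_index i) (cis x)"
    using Kchoice_overlap(1) overlap_in_Aarc v_pos by blast
  also have "\<dots> = cis (K_angle v i x)"
    using overlap arccos_eq overlap_radius_bounds by (intro Kmap_cis) (auto simp: abs_le_iff)
  finally show ?thesis .
qed

lemma Kchoice_123_cis:
  assumes "arc_centre i - arccos v \<le> x" "x < arc_centre i + (pi/3 - overlap_radius v)"
  shows "Kchoice v (1,2,3) (cis x) = cis (K_angle v i x)"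
proof (cases "arc_centre i - (pi/3 - overlap_radius v) < x")
  case True
  with assms show ?thesis by (intro Kchoice_gap) linarith
next
  case False
  then have overlap: "\<bar>x - arc_centre (i - 1) - pi/3\<bar> \<le> overlap_radius v"
    using assms(1) arccos_eq arc_centre_add[of i "-1"] by (auto simp: abs_le_iff)
  then have "Kchoice v (1,2,3) (cis x) = Kmap v (arc_index i) (cis x)"
    using Kchoice_overlap(2)[of v _ "i - 1"] overlap_in_Aarc[of x "i - 1"] v_pos by simp
  also have "\<dots> = cis (K_angle v i x)"
    using assms False by (intro Kmap_cis) linarith
  finally show ?thesis .
qed

lemma Aarc_overlap_subset:
  "Aarc v (arc_index i) \<inter> Aarc v (arc_index (i + 1))
     \<subseteq> cis ` {arc_centre i + pi/3 - overlap_radius v .. arc_centre i + pi/3 + overlap_radius v}"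
proof
  fix p assume p: "p \<in> Aarc v (arc_index i) \<inter> Aarc v (arc_index (i + 1))"
  then have "p \<in> KC" by (auto simp: Aarc_arc_index)
  then obtain x where x: "p = cis x" using KC_cis_Arg by metis
  have "cis x \<in> Aarc v (arc_index i)" "cis x \<in> Aarc v (arc_index (i + 1))"
    using p x by auto
  then obtain m1 m2 where m1: "\<bar>x - arc_centre (i + 3 * m1)\<bar> \<le> arccos v"
    and m2: "\<bar>x - arc_centre (i + 1 + 3 * m2)\<bar> \<le> arccos v"
    unfolding cis_mem_Aarc_arc_index by blast
  have "arc_centre (i + 3 * m1 - 2) < arc_centre (i + 1 + 3 * m2)"
    "arc_centre (i + 1 + 3 * m2) < arc_centre (i + 3 * m1 + 2)"
    using m1 m2 arc_centre_add[of "i + 3 * m1" 2] arc_centre_add[of "i + 3 * m1" "-2"] arccos_bounds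
    by (auto simp: abs_le_iff)
  then have "m2 = m1" unfolding arc_centre_less_iff by presburger
  then have "\<bar>x - arc_centre (i + 3 * m1) - pi/3\<bar> \<le> overlap_radius v"
    using m1 m2 arc_centre_add[of "i + 3 * m1" 1] arccos_eq by (auto simp: abs_le_iff algebra_simps)
  moreover have "arc_centre (i + 3 * m1) = arc_centre i + 2 * pi * of_int m1"
    using arc_centre_add[of i "3 * m1"] by simp
  ultimately have "x - 2 * pi * of_int m1
      \<in> {arc_centre i + pi/3 - overlap_radius v .. arc_centre i + pi/3 + overlap_radius v}"
    by (auto simp: abs_le_iff)
  moreover have "p = cis (x - 2 * pi * of_int m1)"
    using cis_add_2pi_multiple[of "x - 2 * pi * of_int m1" m1] x by simp
  ultimately show "p \<in> cis ` {arc_centre i + pi/3 - overlap_radius v .. arc_centre i + pi/3 + overlap_radius v}"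
    by blast
qed

lemma KC_subset_Aarc_Un: "KC \<subseteq> Aarc v 1 \<union> Aarc v 2 \<union> Aarc v 3"
proof
  fix p assume "p \<in> KC"
  then have p: "p = cis (Arg p)" using KC_cis_Arg by simp
  obtain i where "\<bar>Arg p - arc_centre i\<bar> \<le> arccos v"
  proof (rule angle_in_gap_or_overlap[of "Arg p"])
    fix i assume "\<bar>Arg p - arc_centre i\<bar> < pi/3 - overlap_radius v"
    then show thesis using that[of i] overlap_radius_bounds arccos_eq by linarith
  next
    fix i assume "\<bar>Arg p - arc_centre i - pi/3\<bar> \<le> overlap_radius v"
    then show thesis using that[of i] arccos_eq overlap_radius_bounds by (auto simp: abs_le_iff)
  qed
  then have "p \<in> Aarc v (arc_index i)" using cis_in_Aarc p by metis
  then show "p \<in> Aarc v 1 \<union> Aarc v 2 \<union> Aarc v 3" using arc_index_range[of i] by auto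
qed

lemma K_angle_expanding:
  assumes "arc_centre i - arccos v \<le> l" "l \<le> p" "p \<le> q" "q \<le> r" "r \<le> arc_centre i + arccos v"
    "arc_centre i - pi/3 \<le> p" "q \<le> arc_centre i + pi/3"
  shows "(r - l) + (expansion_rate v - 1) * (q - p) \<le> K_angle v i l - K_angle v i r"
  using K1_angle_expanding[of "l - arc_centre i" "p - arc_centre i" "q - arc_centre i" "r - arc_centre i"]
    assms unfolding K_angle_def by auto

lemma Kchoice_image_interval:
  assumes "arc_centre i - arccos v \<le> l" "l \<le> r" "r \<le> arc_centre i + arccos v"
    and K: "\<And>x. l \<le> x \<Longrightarrow> x \<le> r \<Longrightarrow> Kchoice v w (cis x) = cis (K_angle v i x)"
  shows "cis ` {K_angle v i r .. K_angle v i l} \<subseteq> Kchoice v w ` cis ` {l..r}"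
proof
  fix z assume "z \<in> cis ` {K_angle v i r .. K_angle v i l}"
  then obtain y where y: "K_angle v i r \<le> y" "y \<le> K_angle v i l" and z: "z = cis y" by auto
  have "continuous_on {l..r} (K_angle v i)"
    unfolding K_angle_def using assms(1-3)
    by (intro continuous_intros continuous_on_compose2[OF continuous_on_K1_angle]) auto
  then obtain x where "l \<le> x" "x \<le> r" "K_angle v i x = y"
    using IVT2'[of "K_angle v i" r y l] y assms(2) by auto
  then show "z \<in> Kchoice v w ` cis ` {l..r}" using K z by force
qed

lemma arc_avoiding_bfA_in_gap:
  assumes "l \<le> r" "cis ` {l..r} \<inter> bfA v = {}"
  shows "\<exists>i. arc_centre i - (pi/3 - overlap_radius v) < l \<and> r < arc_centre i + (pi/3 - overlap_radius v)"
proof -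
  have "cis l \<in> cis ` {l..r}" using assms(1) by simp
  with assms(2) have "cis l \<notin> bfA v" by blast
  then obtain i where i: "\<bar>l - arc_centre i\<bar> < pi/3 - overlap_radius v"
    using angle_in_gap_or_overlap[of l] overlap_in_bfA by metis
  have "r < arc_centre i + (pi/3 - overlap_radius v)"
  proof (rule ccontr)
    assume "\<not> r < arc_centre i + (pi/3 - overlap_radius v)"
    then have "arc_centre i + (pi/3 - overlap_radius v) \<in> {l..r}" using i by (auto simp: abs_less_iff)
    moreover have "cis (arc_centre i + (pi/3 - overlap_radius v)) \<in> bfA v"
      using overlap_radius_bounds by (intro overlap_in_bfA[of _ i]) simp
    ultimately show False using assms(2) by blast
  qed
  with i show ?thesis by (intro exI[of _ i]) (auto simp: abs_less_iff)
qed

lemma connected_Kchoice_image: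
  assumes "connected S" "S \<subseteq> KC" "S \<inter> bfA v = {}"
  shows "connected (Kchoice v w ` S)"
proof -
  have "\<exists>k\<in>{1,2,3}. S \<subseteq> Aarc v k"
  proof (rule connected_subset_of_closed_cover[OF assms(1)])
    show "S \<subseteq> (\<Union>k\<in>{1,2,3}. Aarc v k)" using assms(2) KC_subset_Aarc_Un by auto
    show "S \<inter> Aarc v j \<inter> Aarc v k = {}" if "j \<in> {1,2,3}" "k \<in> {1,2,3}" "j \<noteq> k" for j k
      using assms(3) that unfolding bfA_def by auto
  qed (auto simp: closed_Aarc)
  then obtain k where k: "k \<in> {1,2,3}" "S \<subseteq> Aarc v k" ..
  then have "Kchoice v w ` S = Kmap v k ` S"
    using Kchoice_outside_bfA assms(3) by (intro image_cong) blast+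
  moreover have "connected (Kmap v k ` S)"
    using continuous_on_subset[OF continuous_on_Kmap[OF v_pos k(1)] k(2)] assms(1)
    by (rule connected_continuous_image)
  ultimately show ?thesis by simp
qed

lemma Kiter_image_meets_bfA:
  assumes "l0 < r0" "cis ` {l0..r0} \<subseteq> U"
  shows "\<exists>N. Kiter v \<omega> N ` U \<inter> bfA v \<noteq> {}"
proof (rule ccontr)
  assume "\<nexists>N. Kiter v \<omega> N ` U \<inter> bfA v \<noteq> {}"
  then have avoid: "Kiter v \<omega> N ` U \<inter> bfA v = {}" for N by blast
  define g where "g = (expansion_rate v - 1) * (r0 - l0)"
  have g: "g > 0" using assms(1) expansion_rate_gt_1 by (simp add: g_def)
  have grow: "\<exists>l r. l \<le> r \<and> (r0 - l0) + real n * g \<le> r - l \<and> cis ` {l..r} \<subseteq> Kiter v \<omega> n ` U" for n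
  proof (induction n)
    case 0
    show ?case using assms by (intro exI[of _ l0] exI[of _ r0]) auto
  next
    case (Suc n)
    then obtain l r where lr: "l \<le> r" "(r0 - l0) + real n * g \<le> r - l" "cis ` {l..r} \<subseteq> Kiter v \<omega> n ` U"
      by blast
    have "cis ` {l..r} \<inter> bfA v = {}" using lr(3) avoid[of n] by blast
    then obtain i where i: "arc_centre i - (pi/3 - overlap_radius v) < l"
      "r < arc_centre i + (pi/3 - overlap_radius v)"
      using arc_avoiding_bfA_in_gap[OF lr(1)] by blast
    have "cis ` {K_angle v i r .. K_angle v i l} \<subseteq> Kchoice v (\<omega> n) ` cis ` {l..r}"
    proof (rule Kchoice_image_interval)
      show "Kchoice v (\<omega> n) (cis x) = cis (K_angle v i x)" if "l \<le> x" "x \<le> r" for x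
        using i that by (intro Kchoice_gap) (simp add: abs_less_iff)
    qed (use i lr(1) arccos_eq overlap_radius_bounds in auto)
    also have "\<dots> \<subseteq> Kiter v \<omega> (Suc n) ` U"
      unfolding Kiter_Suc_image using lr(3) by blast
    finally have image: "cis ` {K_angle v i r .. K_angle v i l} \<subseteq> Kiter v \<omega> (Suc n) ` U" .
    have gain: "(r - l) + (expansion_rate v - 1) * (r - l) \<le> K_angle v i l - K_angle v i r"
      using i lr(1) arccos_eq overlap_radius_bounds by (intro K_angle_expanding) auto
    have "0 \<le> real n * g" using g by simp
    then have "r0 - l0 \<le> r - l" using lr(2) by linarith
    then have "g \<le> (expansion_rate v - 1) * (r - l)"
      unfolding g_def using expansion_rate_gt_1 by (intro mult_left_mono) auto
    then have "(r0 - l0) + real (Suc n) * g \<le> K_angle v i l - K_angle v i r"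
      using gain lr(2) by (simp add: algebra_simps)
    moreover have "K_angle v i r \<le> K_angle v i l"
      using gain lr(1) expansion_rate_gt_1 by (smt (verit) mult_nonneg_nonneg)
    ultimately show ?case using image by blast
  qed
  obtain n where n: "2 * (pi/3 - overlap_radius v) < real n * g"
    using reals_Archimedean3[OF g] by blast
  obtain l r where lr: "l \<le> r" "(r0 - l0) + real n * g \<le> r - l" "cis ` {l..r} \<subseteq> Kiter v \<omega> n ` U"
    using grow by blast
  have "cis ` {l..r} \<inter> bfA v = {}" using lr(3) avoid[of n] by blast
  then obtain i where "arc_centre i - (pi/3 - overlap_radius v) < l" "r < arc_centre i + (pi/3 - overlap_radius v)"
    using arc_avoiding_bfA_in_gap[OF lr(1)] by blast
  then show False using lr(2) n assms(1) by argo
qed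

lemma Kiter_image_connected_meets_bfA:
  assumes "connected U" "U \<subseteq> KC" "l0 < r0" "cis ` {l0..r0} \<subseteq> U"
  shows "\<exists>N. connected (Kiter v \<omega> N ` U) \<and> Kiter v \<omega> N ` U \<inter> bfA v \<noteq> {}"
proof -
  define N where "N = (LEAST N. Kiter v \<omega> N ` U \<inter> bfA v \<noteq> {})"
  have meets: "Kiter v \<omega> N ` U \<inter> bfA v \<noteq> {}"
    unfolding N_def by (rule LeastI_ex[OF Kiter_image_meets_bfA[OF assms(3,4)]])
  have "connected (Kiter v \<omega> n ` U)" if "n \<le> N" for n
    using that
  proof (induction n)
    case 0
    then show ?case using assms(1) by simp
  next
    case (Suc n)
    then have "n < N" by simp
    then have avoid: "Kiter v \<omega> n ` U \<inter> bfA v = {}"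
      unfolding N_def using not_less_Least by blast
    have "connected (Kiter v \<omega> n ` U)" using Suc by simp
    from connected_Kchoice_image[OF this Kiter_image_subset_KC[OF assms(2)] avoid]
    show ?case unfolding Kiter_Suc_image .
  qed
  with meets show ?thesis by blast
qed

end

lemma node_cases:
  obtains j where "of_int k * (pi/3) = arc_centre j"
  | j where "of_int k * (pi/3) = arc_centre j + pi/3"
proof -
  define j where "j = k div 2"
  have "k = 2 * j \<or> k = 2 * j + 1" unfolding j_def by presburger
  then show ?thesis
  proof
    assume "k = 2 * j"
    then show ?thesis using that(1)[of j] by (simp add: arc_centre_def field_simps)
  next
    assume "k = 2 * j + 1"
    then show ?thesis using that(2)[of j] by (simp add: arc_centre_def field_simps)
  qed
qed

text \<open>The nodes \<open>k pi/3\<close> are the arc centres (even \<open>k\<close>) and the midpoints of the overlaps (odd \<open>k\<close>).\<close>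

definition spans_node :: "real \<Rightarrow> real \<Rightarrow> real \<Rightarrow> bool" where
  "spans_node v l r \<longleftrightarrow>
     (\<exists>k::int. l \<le> of_int k * (pi/3) - overlap_radius v \<and> of_int k * (pi/3) + overlap_radius v \<le> r)"

context kasner_parameter
begin

lemma not_spans_node_length:
  assumes "\<not> spans_node v l r"
  shows "r - l < pi/3 + 2 * overlap_radius v"
proof -
  define k where "k = \<lfloor>(l + overlap_radius v) / (pi/3)\<rfloor> + 1"
  have "of_int (k - 1) * (pi/3) \<le> l + overlap_radius v" "l + overlap_radius v < of_int k * (pi/3)"
    using floor_divide_lower[of "pi/3" "l + overlap_radius v"]
      floor_divide_upper[of "pi/3" "l + overlap_radius v"] unfolding k_def by simp_all
  moreover have "\<not> (l \<le> of_int k * (pi/3) - overlap_radius v \<and> of_int k * (pi/3) + overlap_radius v \<le> r)"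
    using assms unfolding spans_node_def by blast
  ultimately show ?thesis by (simp add: algebra_simps)
qed

lemma spans_node_overlap_subset:
  assumes "spans_node v l r" "cis ` {l..r} \<subseteq> S"
  shows "\<exists>i. Aarc v (arc_index i) \<inter> Aarc v (arc_index (i + 1)) \<subseteq> S
    \<or> Aarc v (arc_index i) \<inter> Aarc v (arc_index (i + 1)) \<subseteq> Kchoice v w ` S"
proof -
  obtain k :: int where k: "l \<le> of_int k * (pi/3) - overlap_radius v" "of_int k * (pi/3) + overlap_radius v \<le> r"
    using assms(1) unfolding spans_node_def by blast
  show ?thesis
  proof (cases k rule: node_cases)
    case (2 j)
    then have "l \<le> arc_centre j + pi/3 - overlap_radius v" "arc_centre j + pi/3 + overlap_radius v \<le> r"
      using k by linarith+
    then have "cis ` {arc_centre j + pi/3 - overlap_radius v .. arc_centre j + pi/3 + overlap_radius v} \<subseteq> S"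
      using assms(2) by auto
    then show ?thesis using Aarc_overlap_subset[of j] by blast
  next
    case (1 j)
    let ?l = "arc_centre j - overlap_radius v" and ?r = "arc_centre j + overlap_radius v"
    have "cis ` {K_angle v j ?r .. K_angle v j ?l} \<subseteq> Kchoice v w ` cis ` {?l..?r}"
    proof (rule Kchoice_image_interval)
      show "Kchoice v w (cis x) = cis (K_angle v j x)" if "?l \<le> x" "x \<le> ?r" for x
        using that overlap_radius_bounds by (intro Kchoice_gap) (auto simp: abs_le_iff)
    qed (use overlap_radius_bounds arccos_eq in auto)
    also have "\<dots> \<subseteq> Kchoice v w ` S"
    proof -
      have "l \<le> ?l" "?r \<le> r" using 1 k by linarith+
      then have "cis ` {?l..?r} \<subseteq> S" using assms(2) by auto
      then show ?thesis by (rule image_mono)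
    qed
    finally have image: "cis ` {K_angle v j ?r .. K_angle v j ?l} \<subseteq> Kchoice v w ` S" .
    have "overlap_radius v \<le> K_angle v j ?l - K_angle v j (arc_centre j)"
      "overlap_radius v \<le> K_angle v j (arc_centre j) - K_angle v j ?r"
      using K_angle_expanding[of j ?l "arc_centre j" "arc_centre j" "arc_centre j"]
        K_angle_expanding[of j "arc_centre j" "arc_centre j" "arc_centre j" ?r]
        overlap_radius_bounds arccos_eq by auto
    moreover have "K_angle v j (arc_centre j) = arc_centre (j + 1) + pi/3"
      by (simp add: K_angle_def K1_angle_def arc_centre_add)
    ultimately have "{arc_centre (j + 1) + pi/3 - overlap_radius v .. arc_centre (j + 1) + pi/3 + overlap_radius v}
        \<subseteq> {K_angle v j ?r .. K_angle v j ?l}"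
      by auto
    with image have "cis ` {arc_centre (j + 1) + pi/3 - overlap_radius v .. arc_centre (j + 1) + pi/3 + overlap_radius v}
        \<subseteq> Kchoice v w ` S"
      by blast
    then show ?thesis using Aarc_overlap_subset[of "j + 1"] by blast
  qed
qed

lemma Kchoice_interval_growth_on_arc:
  assumes "l \<le> p" "p \<le> q" "q \<le> r" "arc_centre i - arccos v \<le> l" "r \<le> arc_centre i + arccos v"
    "arc_centre i - pi/3 \<le> p" "q \<le> arc_centre i + pi/3"
    and K: "\<And>x. l \<le> x \<Longrightarrow> x \<le> r \<Longrightarrow> Kchoice v w (cis x) = cis (K_angle v i x)"
    and long: "min ((r - l) / 2) (overlap_radius v) \<le> q - p"
  shows "\<exists>l' r'. l' \<le> r' \<and> (r - l) + (expansion_rate v - 1) * min ((r - l) / 2) (overlap_radius v) \<le> r' - l'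
    \<and> cis ` {l'..r'} \<subseteq> Kchoice v w ` cis ` {l..r}"
proof -
  have "(expansion_rate v - 1) * min ((r - l) / 2) (overlap_radius v) \<le> (expansion_rate v - 1) * (q - p)"
    using long expansion_rate_gt_1 by (intro mult_left_mono) auto
  moreover have "(r - l) + (expansion_rate v - 1) * (q - p) \<le> K_angle v i l - K_angle v i r"
    using assms by (intro K_angle_expanding) auto
  ultimately have gain: "(r - l) + (expansion_rate v - 1) * min ((r - l) / 2) (overlap_radius v)
      \<le> K_angle v i l - K_angle v i r"
    by linarith
  have "0 \<le> (expansion_rate v - 1) * min ((r - l) / 2) (overlap_radius v)"
    using assms(1-3) expansion_rate_gt_1 overlap_radius_bounds by (intro mult_nonneg_nonneg) auto
  with gain assms(1-3) have "K_angle v i r \<le> K_angle v i l" by linarith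
  moreover have "cis ` {K_angle v i r .. K_angle v i l} \<subseteq> Kchoice v w ` cis ` {l..r}"
    using assms(1-5) K by (intro Kchoice_image_interval) auto
  ultimately show ?thesis using gain by blast
qed

text \<open>Away from the nodes an interval meets at most one overlap, so one of the choices
  \<open>(2,3,1)\<close>, \<open>(1,2,3)\<close> acts on all of it by a single \<^term>\<open>K_angle v i\<close>, and a part of it of
  length at least \<open>min ((r - l)/2) (overlap_radius v)\<close> lies where that map expands by
  \<^term>\<open>expansion_rate v\<close>.\<close>

lemma Kchoice_interval_growth:
  assumes "l \<le> r" "\<not> spans_node v l r"
  shows "\<exists>w\<in>{(2,3,1), (1,2,3)}. \<exists>l' r'. l' \<le> r'
    \<and> (r - l) + (expansion_rate v - 1) * min ((r - l) / 2) (overlap_radius v) \<le> r' - l'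
    \<and> cis ` {l'..r'} \<subseteq> Kchoice v w ` cis ` {l..r}"
proof -
  define e where "e = overlap_radius v"
  have e: "0 < e" "e < pi/6" "arccos v = pi/3 + e"
    using overlap_radius_bounds arccos_eq unfolding e_def by auto
  define k where "k = \<lfloor>(l + e) / (pi/3)\<rfloor>"
  have k: "of_int k * (pi/3) \<le> l + e" "l + e < of_int k * (pi/3) + pi/3"
    using floor_divide_lower[of "pi/3" "l + e"] floor_divide_upper[of "pi/3" "l + e"]
    unfolding k_def by (simp_all add: algebra_simps)
  have "\<not> (l \<le> of_int (k + 1) * (pi/3) - e \<and> of_int (k + 1) * (pi/3) + e \<le> r)"
    using assms(2) unfolding spans_node_def e_def by blast
  moreover have "of_int (k + 1) * (pi/3) = of_int k * (pi/3) + pi/3"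
    by (simp add: algebra_simps)
  ultimately have r: "r < of_int k * (pi/3) + pi/3 + e"
    using k by linarith
  show ?thesis
  proof (cases k rule: node_cases)
    case (1 j)
    have "\<exists>l' r'. l' \<le> r' \<and> (r - l) + (expansion_rate v - 1) * min ((r - l) / 2) e \<le> r' - l'
        \<and> cis ` {l'..r'} \<subseteq> Kchoice v (2,3,1) ` cis ` {l..r}"
    proof (rule Kchoice_interval_growth_on_arc[of l l "min r (arc_centre j + pi/3)" r j, folded e_def])
      show "Kchoice v (2,3,1) (cis x) = cis (K_angle v j x)" if "l \<le> x" "x \<le> r" for x
        using that k r e 1 e_def by (intro Kchoice_231_cis) auto
    qed (use k r e 1 assms(1) in \<open>auto simp: min_def\<close>)
    then show ?thesis unfolding e_def by blast
  next
    case (2 j)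
    note centre_succ = arc_centre_add[of j 1]
    have l: "arc_centre j + pi/3 - e \<le> l" and r: "r < arc_centre j + 2*pi/3 + e"
      using k r 2 by linarith+
    show ?thesis
    proof (cases "(l + r) / 2 \<le> arc_centre j + pi/3 \<and> r \<le> arc_centre j + arccos v")
      case True
      have "\<exists>l' r'. l' \<le> r' \<and> (r - l) + (expansion_rate v - 1) * min ((r - l) / 2) e \<le> r' - l'
          \<and> cis ` {l'..r'} \<subseteq> Kchoice v (2,3,1) ` cis ` {l..r}"
      proof (rule Kchoice_interval_growth_on_arc[of l l "(l + r) / 2" r j, folded e_def])
        show "Kchoice v (2,3,1) (cis x) = cis (K_angle v j x)" if "l \<le> x" "x \<le> r" for x
          using that l e True e_def by (intro Kchoice_231_cis) auto
      qed (use l r e True assms(1) in auto)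
      then show ?thesis unfolding e_def by blast
    next
      case False
      then have far: "arc_centre j + pi/3 < (l + r) / 2 \<or> arc_centre j + pi/3 + e < r"
        using e by auto
      have "\<exists>l' r'. l' \<le> r' \<and> (r - l) + (expansion_rate v - 1) * min ((r - l) / 2) e \<le> r' - l'
          \<and> cis ` {l'..r'} \<subseteq> Kchoice v (1,2,3) ` cis ` {l..r}"
      proof (rule Kchoice_interval_growth_on_arc[of l "max l (arc_centre j + pi/3)" r r "j + 1", folded e_def])
        show "Kchoice v (1,2,3) (cis x) = cis (K_angle v (j + 1) x)" if "l \<le> x" "x \<le> r" for x
          using that l r e centre_succ e_def by (intro Kchoice_123_cis) linarith+
      qed (use l r e far centre_succ assms(1) in \<open>auto simp: min_def max_def\<close>)
      then show ?thesis unfolding e_def by blast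
    qed
  qed
qed

end

definition overlap_reachable :: "real \<Rightarrow> complex set \<Rightarrow> bool" where
  "overlap_reachable v S \<longleftrightarrow>
     (\<exists>\<omega>\<in>SigmaSp. \<exists>M::nat. \<exists>\<alpha>\<in>{1,2,3::nat}. \<exists>\<beta>\<in>{1,2,3::nat}. \<alpha> \<noteq> \<beta> \<and>
        Aarc v \<alpha> \<inter> Aarc v \<beta> \<subseteq> Kiter v \<omega> M ` S)"

lemma Kiter_case_nat_Suc: "Kiter v (case_nat w \<omega>) (Suc n) = Kiter v \<omega> n \<circ> Kchoice v w"
proof (induction n)
  case 0
  show ?case by simp
next
  case (Suc n)
  have "Kiter v (case_nat w \<omega>) (Suc (Suc n)) = Kchoice v (\<omega> n) \<circ> Kiter v (case_nat w \<omega>) (Suc n)"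
    by (simp only: Kiter.simps nat.case)
  also have "\<dots> = Kiter v \<omega> (Suc n) \<circ> Kchoice v w"
    unfolding Suc.IH by (simp add: comp_assoc)
  finally show ?case .
qed

lemma overlap_reachableI:
  assumes "Aarc v (arc_index i) \<inter> Aarc v (arc_index (i + 1)) \<subseteq> S"
  shows "overlap_reachable v S"
proof -
  have "(\<lambda>_. (1,2,3)) \<in> SigmaSp" by (simp add: SigmaSp_def)
  moreover have "Aarc v (arc_index i) \<inter> Aarc v (arc_index (i + 1)) \<subseteq> Kiter v (\<lambda>_. (1,2,3)) 0 ` S"
    using assms by simp
  ultimately show ?thesis
    unfolding overlap_reachable_def using arc_index_range arc_index_succ_neq by metis
qed

lemma overlap_reachable_Kchoice:
  assumes "w \<in> {1,2} \<times> {2,3} \<times> {1,3}" "overlap_reachable v (Kchoice v w ` S)"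
  shows "overlap_reachable v S"
proof -
  obtain \<omega> M \<alpha> \<beta> where "\<omega> \<in> SigmaSp" "\<alpha> \<in> {1,2,3}" "\<beta> \<in> {1,2,3}" "\<alpha> \<noteq> \<beta>"
    "Aarc v \<alpha> \<inter> Aarc v \<beta> \<subseteq> Kiter v \<omega> M ` Kchoice v w ` S"
    using assms(2) unfolding overlap_reachable_def by blast
  moreover have "case_nat w \<omega> \<in> SigmaSp"
    using assms(1) \<open>\<omega> \<in> SigmaSp\<close> by (auto simp: SigmaSp_def split: nat.split)
  moreover have "Kiter v \<omega> M ` Kchoice v w ` S = Kiter v (case_nat w \<omega>) (Suc M) ` S"
    unfolding Kiter_case_nat_Suc by (simp only: image_comp)
  ultimately show ?thesis unfolding overlap_reachable_def by metis
qed

context kasner_parameter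
begin

lemma overlap_reachable_if_spans_node:
  assumes "spans_node v l r" "cis ` {l..r} \<subseteq> S"
  shows "overlap_reachable v S"
proof -
  obtain i where "Aarc v (arc_index i) \<inter> Aarc v (arc_index (i + 1)) \<subseteq> S
      \<or> Aarc v (arc_index i) \<inter> Aarc v (arc_index (i + 1)) \<subseteq> Kchoice v (1,2,3) ` S"
    using spans_node_overlap_subset[OF assms] by blast
  then show ?thesis
  proof
    assume "Aarc v (arc_index i) \<inter> Aarc v (arc_index (i + 1)) \<subseteq> S"
    then show ?thesis by (rule overlap_reachableI)
  next
    assume "Aarc v (arc_index i) \<inter> Aarc v (arc_index (i + 1)) \<subseteq> Kchoice v (1,2,3) ` S"
    then have "overlap_reachable v (Kchoice v (1,2,3) ` S)" by (rule overlap_reachableI)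
    then show ?thesis by (rule overlap_reachable_Kchoice[rotated]) simp
  qed
qed

lemma overlap_reachable_from_arc:
  assumes "l0 < r0" "cis ` {l0..r0} \<subseteq> U"
  shows "overlap_reachable v U"
proof -
  define g where "g = (expansion_rate v - 1) * min ((r0 - l0) / 2) (overlap_radius v)"
  have g: "0 < g"
    using assms(1) expansion_rate_gt_1 overlap_radius_bounds unfolding g_def by simp
  have reach: "overlap_reachable v S"
    if "r0 - l0 \<le> r - l" "pi/3 + 2 * overlap_radius v < (r - l) + real n * g" "cis ` {l..r} \<subseteq> S"
    for l r n S
    using that
  proof (induction n arbitrary: l r S)
    case 0
    have "spans_node v l r"
    proof (rule ccontr)
      assume "\<not> spans_node v l r"
      from not_spans_node_length[OF this] show False using "0.prems"(2) by simp
    qed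
    then show ?case using "0.prems"(3) by (rule overlap_reachable_if_spans_node)
  next
    case (Suc n)
    show ?case
    proof (cases "spans_node v l r")
      case True
      then show ?thesis using Suc.prems(3) by (rule overlap_reachable_if_spans_node)
    next
      case False
      have "l \<le> r" using Suc.prems(1) assms(1) by linarith
      obtain w l' r' where w: "w \<in> {(2,3,1), (1,2,3)}"
        and grow: "(r - l) + (expansion_rate v - 1) * min ((r - l) / 2) (overlap_radius v) \<le> r' - l'"
        and image: "cis ` {l'..r'} \<subseteq> Kchoice v w ` cis ` {l..r}"
        using Kchoice_interval_growth[OF \<open>l \<le> r\<close> False] by blast
      have "g \<le> (expansion_rate v - 1) * min ((r - l) / 2) (overlap_radius v)"
        unfolding g_def using Suc.prems(1) expansion_rate_gt_1
        by (intro mult_left_mono min.mono) auto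
      moreover have "real (Suc n) * g = real n * g + g"
        by (simp add: algebra_simps)
      ultimately have "r0 - l0 \<le> r' - l'" "pi/3 + 2 * overlap_radius v < (r' - l') + real n * g"
        using Suc.prems(1,2) grow g by linarith+
      moreover have "cis ` {l'..r'} \<subseteq> Kchoice v w ` S"
        using image Suc.prems(3) by blast
      ultimately have "overlap_reachable v (Kchoice v w ` S)" by (rule Suc.IH)
      then show ?thesis by (rule overlap_reachable_Kchoice[rotated]) (use w in auto)
    qed
  qed
  obtain n where "pi/3 + 2 * overlap_radius v - (r0 - l0) < real n * g"
    using reals_Archimedean3[OF g] by blast
  then show ?thesis by (intro reach[where l = l0 and r = r0 and n = n]) (use assms(2) in auto)
qed

end

lemma openin_KC_contains_arc:
  assumes "openin (top_of_set KC) U" "p \<in> U"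
  obtains l r where "l < r" "cis ` {l..r} \<subseteq> U"
proof -
  have "openin (top_of_set UNIV) (UNIV \<inter> cis -` U)"
    using assms(1) by (intro continuous_openin_preimage[of _ _ KC]) (auto intro: continuous_intros simp: KC_def)
  then have "open (cis -` U)" by simp
  moreover have "Arg p \<in> cis -` U"
    using assms KC_cis_Arg openin_imp_subset by fastforce
  ultimately obtain d where "d > 0" "cball (Arg p) d \<subseteq> cis -` U"
    using open_contains_cball by blast
  then show ?thesis
    using that[of "Arg p - d" "Arg p + d"] by (auto simp: cball_eq_atLeastAtMost)
qed

theorem lemma1:
  fixes v :: real and U :: "complex set"
  assumes "0 < v" and "v < 1/2"
    and "openin (top_of_set KC) U" and "connected U" and "U \<noteq> {}"
  shows "(\<forall>\<omega>\<in>SigmaSp. \<exists>N::nat. connected (Kiter v \<omega> N ` U) \<and> Kiter v \<omega> N ` U \<inter> bfA v \<noteq> {})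
       \<and> (\<exists>\<omega>\<in>SigmaSp. \<exists>M::nat. \<exists>\<alpha>\<in>{1,2,3::nat}. \<exists>\<beta>\<in>{1,2,3::nat}. \<alpha> \<noteq> \<beta> \<and>
             Aarc v \<alpha> \<inter> Aarc v \<beta> \<subseteq> Kiter v \<omega> M ` U)"
proof -
  interpret kasner_parameter v using assms(1,2) by unfold_locales
  obtain p where "p \<in> U" using assms(5) by blast
  then obtain l0 r0 where arc: "l0 < r0" "cis ` {l0..r0} \<subseteq> U"
    using openin_KC_contains_arc[OF assms(3)] by blast
  have "U \<subseteq> KC" using assms(3) by (rule openin_imp_subset)
  then show ?thesis
    using Kiter_image_connected_meets_bfA[OF assms(4) _ arc] overlap_reachable_from_arc[OF arc]
    unfolding overlap_reachable_def by blast
qed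

end
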